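(* Consider the $n$-body problem in ${\bf S}^2$ with all masses equal to $m>0$, and let $\alpha_i=2\pi i/n$, $i=1,\dots,n$. If $n$ is odd, then for every $m>0$ and every $z\in(-1,1)$ there exist $\omega>0$ and $\omega<0$ such that ${\bf q}_i(t)=(r\cos(\omega t+\alpha_i), r\sin(\omega t+\alpha_i), z)$, $r=(1-z^2)^{1/2}$, $i=1,\dots,n$, is a solution of the equations of motion (an elliptic relative equilibrium in which the regular $n$-gon rotates in the plane $z=$ constant). If $n$ is even, the same holds for every $z\in(-1,0)\cup(0,1)$.
   Context: The $n$-body problem in ${\bf S}^2$: bodies of masses $m_1,\dots,m_n>0$ have positions ${\bf q}_i=(x_i,y_i,z_i)\in\mathbb R^3$ on the unit sphere ${\bf S}^2=\{{\bf q}:{\bf q}\cdot{\bf q}=1\}$ ($\cdot$ the Euclidean inner product), and satisfy $$\ddot{\bf q}_i=\sum_{j\ne i}\frac{m_j[{\bf q}_j-({\bf q}_i\cdot{\bf q}_j){\bf q}_i]}{[1-({\bf q}_i\cdot{\bf q}_j)^2]^{3/2}}-(\dot{\bf q}_i\cdot\dot{\bf q}_i){\bf q}_i,\qquad {\bf q}_i\cdot{\bf q}_i=1,\ \ {\bf q}_i\cdot\dot{\bf q}_i=0,$$ $i=1,\dots,n$, defined only for configurations with $({\bf q}_i\cdot{\bf q}_j)^2\ne 1$ for all $i\ne j$. *)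

theory Defs
  imports "HOL-Analysis.Analysis"
begin

definition nbody_accel ::
  "nat \<Rightarrow> (nat \<Rightarrow> real) \<Rightarrow> (nat \<Rightarrow> real^3) \<Rightarrow> (nat \<Rightarrow> real^3) \<Rightarrow> nat \<Rightarrow> real^3" where
  "nbody_accel n mass x v i =
     (\<Sum>j\<in>{1..n} - {i}.
        (mass j / (1 - (x i \<bullet> x j)^2) powr (3/2)) *\<^sub>R (x j - (x i \<bullet> x j) *\<^sub>R x i))
     - (v i \<bullet> v i) *\<^sub>R x i"

definition nbody_S2_solution ::
  "nat \<Rightarrow> (nat \<Rightarrow> real) \<Rightarrow> (nat \<Rightarrow> real \<Rightarrow> real^3) \<Rightarrow> bool" where
  "nbody_S2_solution n mass q \<longleftrightarrow>
     (\<exists>v a. \<forall>t. \<forall>i\<in>{1..n}.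
        (q i has_vector_derivative v i t) (at t) \<and>
        (v i has_vector_derivative a i t) (at t) \<and>
        q i t \<bullet> q i t = 1 \<and> q i t \<bullet> v i t = 0 \<and>
        (\<forall>j\<in>{1..n}. j \<noteq> i \<longrightarrow> (q i t \<bullet> q j t)^2 \<noteq> 1) \<and>
        a i t = nbody_accel n mass (\<lambda>j. q j t) (\<lambda>j. v j t) i)"

definition rotating_ngon :: "nat \<Rightarrow> real \<Rightarrow> real \<Rightarrow> nat \<Rightarrow> real \<Rightarrow> real^3" where
  "rotating_ngon n z w i t =
     (let r = sqrt (1 - z^2); \<alpha> = 2 * pi * real i / real n
      in vector [r * cos (w * t + \<alpha>), r * sin (w * t + \<alpha>), z])"

end

theory Submission
  imports Defs
begin

(* The regular n-gon at height z, rotating rigidly with angular velocity w, is a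
   relative equilibrium of the curved n-body problem on S^2 as soon as
   w^2 = ring_coupling n m z, a finite sum over the other vertices seen from one
   vertex (defined below).
   Since ring_coupling n m z > 0, both w = sqrt(ring_coupling n m z) and its
   negative work, which is the theorem. *)

section \<open>Points on a horizontal circle of the sphere\<close>

definition circle_point :: "real \<Rightarrow> real \<Rightarrow> real \<Rightarrow> real^3" where
  "circle_point r z \<theta> = vector [r * cos \<theta>, r * sin \<theta>, z]"

lemma inner_vec3: "(x::real^3) \<bullet> y = x$1 * y$1 + x$2 * y$2 + x$3 * y$3"
  by (simp add: inner_vec_def sum_3)

lemma circle_point_inner:
  "circle_point r z a \<bullet> circle_point r z b = r^2 * cos (b - a) + z^2"
  by (simp add: circle_point_def inner_vec3 cos_diff power2_eq_square algebra_simps)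

lemma circle_point_on_sphere:
  assumes "r^2 = 1 - z^2"
  shows "circle_point r z a \<bullet> circle_point r z a = 1"
  using assms by (simp add: circle_point_inner)

lemma vector3_has_vector_derivative:
  assumes "(f1 has_real_derivative d1) (at t)" "(f2 has_real_derivative d2) (at t)"
    "(f3 has_real_derivative d3) (at t)"
  shows "((\<lambda>t. vector [f1 t, f2 t, f3 t] :: real^3) has_vector_derivative vector [d1, d2, d3]) (at t)"
proof -
  let ?e1 = "vector [1, 0, 0] :: real^3" and ?e2 = "vector [0, 1, 0] :: real^3"
    and ?e3 = "vector [0, 0, 1] :: real^3"
  have curve: "(\<lambda>t. vector [f1 t, f2 t, f3 t] :: real^3) = (\<lambda>t. f1 t *\<^sub>R ?e1 + f2 t *\<^sub>R ?e2 + f3 t *\<^sub>R ?e3)"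
    by (rule ext) (simp add: vec_eq_iff forall_3)
  have deriv: "vector [d1, d2, d3] =
      (f1 t *\<^sub>R 0 + d1 *\<^sub>R ?e1) + (f2 t *\<^sub>R 0 + d2 *\<^sub>R ?e2) + (f3 t *\<^sub>R 0 + d3 *\<^sub>R ?e3)"
    by (simp add: vec_eq_iff forall_3)
  show ?thesis unfolding curve deriv
    by (intro has_vector_derivative_add has_vector_derivative_scaleR assms has_vector_derivative_const)
qed

lemma circle_motion_velocity:
  "((\<lambda>t. circle_point r z (w * t + a)) has_vector_derivative
     vector [- r * w * sin (w * t + a), r * w * cos (w * t + a), 0]) (at t)"
  unfolding circle_point_def
  by (rule vector3_has_vector_derivative) (auto intro!: derivative_eq_intros)

lemma circle_motion_acceleration:
  "((\<lambda>t. vector [- r * w * sin (w * t + a), r * w * cos (w * t + a), 0] :: real^3)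
     has_vector_derivative vector [- r * w^2 * cos (w * t + a), - r * w^2 * sin (w * t + a), 0]) (at t)"
  by (rule vector3_has_vector_derivative)
     (auto intro!: derivative_eq_intros simp: power2_eq_square)

lemma circle_velocity_orthogonal:
  "circle_point r z \<theta> \<bullet> vector [- r * w * sin \<theta>, r * w * cos \<theta>, 0] = 0"
  by (simp add: circle_point_def inner_vec3 algebra_simps)

lemma circle_velocity_sq:
  "vector [- r * w * sin \<theta>, r * w * cos \<theta>, 0] \<bullet> (vector [- r * w * sin \<theta>, r * w * cos \<theta>, 0] :: real^3)
     = r^2 * w^2"
proof -
  have "vector [- r * w * sin \<theta>, r * w * cos \<theta>, 0] \<bullet> (vector [- r * w * sin \<theta>, r * w * cos \<theta>, 0] :: real^3)
      = r^2 * w^2 * ((sin \<theta>)^2 + (cos \<theta>)^2)"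
    unfolding inner_vec3 vector_3 power2_eq_square by algebra
  then show ?thesis by simp
qed

section \<open>Sums over the vertices of a regular polygon\<close>

lemma sum_polygon_shift:
  fixes f :: "real \<Rightarrow> 'a::comm_monoid_add"
  assumes periodic: "\<And>x. f (x + 2 * pi) = f x" and i: "i \<in> {1..n}"
  shows "(\<Sum>j\<in>{1..n} - {i}. f (2 * pi * (real j - real i) / real n))
       = (\<Sum>k\<in>{1..n-1}. f (2 * pi * real k / real n))"
proof (rule sym, rule sum.reindex_bij_witness[where j = "\<lambda>k. if i + k \<le> n then i + k else i + k - n"
       and i = "\<lambda>j. if j > i then j - i else j + n - i"])
  fix k
  show "f (2 * pi * (real (if i + k \<le> n then i + k else i + k - n) - real i) / real n)
      = f (2 * pi * real k / real n)"
  proof (cases "i + k \<le> n")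
    case False
    have "2 * pi * (real (i + k - n) - real i) / real n + 2 * pi = 2 * pi * real k / real n"
      using False i by (simp add: of_nat_diff field_simps)
    then show ?thesis using False periodic by metis
  qed simp
qed (use i in auto)

lemma sum_polygon_reflect:
  fixes f :: "real \<Rightarrow> 'a::comm_monoid_add"
  shows "(\<Sum>k\<in>{1..n-1}. f (2 * pi * real k / real n))
       = (\<Sum>k\<in>{1..n-1}. f (2 * pi - 2 * pi * real k / real n))"
proof (rule sum.reindex_bij_witness[where i = "\<lambda>k. n - k" and j = "\<lambda>k. n - k"])
  fix k assume k: "k \<in> {1..n-1}"
  then have "k \<le> n" "real n > 0" by auto
  then have "2 * pi * real (n - k) / real n = 2 * pi - 2 * pi * real k / real n"
    by (simp add: of_nat_diff field_simps)
  then show "f (2 * pi - 2 * pi * real (n - k) / real n) = f (2 * pi * real k / real n)"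
    by simp
qed auto

lemma sum_polygon_odd:
  fixes f :: "real \<Rightarrow> real"
  assumes odd: "\<And>x. f (2 * pi - x) = - f x"
  shows "(\<Sum>k\<in>{1..n-1}. f (2 * pi * real k / real n)) = 0"
  using sum_polygon_reflect[of f n] by (simp add: odd sum_negf)

section \<open>Distinct vertices do not collide\<close>

text \<open>Distinct vertices are not equal: \<open>2\<pi>D/n\<close> is not a multiple of \<open>2\<pi>\<close> for \<open>0 < |D| < n\<close>.\<close>
lemma cos_polygon_ne_1:
  fixes D :: int
  assumes "D \<noteq> 0" "\<bar>D\<bar> < int n"
  shows "cos (2 * pi * of_int D / real n) \<noteq> 1"
proof
  assume "cos (2 * pi * of_int D / real n) = 1"
  then obtain k :: int where "2 * pi * of_int D / real n = of_int k * 2 * pi"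
    by (auto simp: cos_one_2pi_int)
  with assms have "real_of_int D = real_of_int (k * int n)"
    by (simp add: field_simps split: if_splits)
  then have D: "D = k * int n" by (simp only: of_int_eq_iff)
  with assms have "1 \<le> \<bar>k\<bar>" by auto
  then have "int n \<le> \<bar>k\<bar> * int n" by (simp add: mult_le_cancel_right1)
  with D assms show False by (simp add: abs_mult)
qed

text \<open>Antipodal longitudes \<open>2\<pi>D/n \<equiv> \<pi>\<close> force \<open>n\<close> to be even.\<close>
lemma cos_polygon_eq_minus_1_even:
  fixes D :: int
  assumes "cos (2 * pi * of_int D / real n) = -1" and "n > 0"
  shows "even n"
proof -
  obtain k :: int where "2 * pi * of_int D / real n = (2 * of_int k + 1) * pi"
    using assms(1) by (auto simp: cos_eq_minus1)
  with assms(2) have "pi * (2 * of_int D) = pi * ((2 * of_int k + 1) * real n)"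
    by (simp add: field_simps)
  then have "real_of_int (2 * D) = real_of_int ((2 * k + 1) * int n)"
    by simp
  then have "2 * D = (2 * k + 1) * int n" by (simp only: of_int_eq_iff)
  then have "even ((2 * k + 1) * int n)" by (metis dvd_triv_left)
  then show ?thesis by simp
qed

text \<open>Vertices at angular distance \<open>2\<pi>D/n\<close> are neither equal nor antipodal, so the
  equations of motion are defined along the rotating polygon.\<close>
lemma polygon_no_collision:
  fixes D :: int
  assumes z: "z^2 < 1" and D: "D \<noteq> 0" "\<bar>D\<bar> < int n" and odd: "odd n \<or> z \<noteq> 0"
  shows "((1 - z^2) * cos (2 * pi * of_int D / real n) + z^2)^2 \<noteq> 1"
proof
  let ?c = "cos (2 * pi * of_int D / real n)"
  assume "((1 - z^2) * ?c + z^2)^2 = 1"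
  then have "(1 - z^2) * ?c + z^2 = 1 \<or> (1 - z^2) * ?c + z^2 = -1"
    by (simp add: power2_eq_1_iff)
  then show False
  proof
    assume "(1 - z^2) * ?c + z^2 = 1"
    then have "(1 - z^2) * (?c - 1) = 0" by (simp add: algebra_simps)
    with z have "?c = 1" by simp
    with cos_polygon_ne_1[OF D] show False by simp
  next
    assume antipodal: "(1 - z^2) * ?c + z^2 = -1"
    have "?c + 1 \<ge> 0" using cos_ge_minus_one[of "2 * pi * of_int D / real n"] by linarith
    with z have "(1 - z^2) * (?c + 1) \<ge> 0" by simp
    moreover have "(1 - z^2) * (?c + 1) = - 2 * z^2" using antipodal by (simp add: algebra_simps)
    ultimately have z0: "z = 0" by simp
    with antipodal have "?c = -1" by simp
    with D have "even n" by (intro cos_polygon_eq_minus_1_even) auto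
    with odd z0 show False by simp
  qed
qed

section \<open>The force balance\<close>

text \<open>The squared angular velocity of the relative equilibrium: the sum, over the other vertices
  at angular offsets \<open>2\<pi>k/n\<close>, of their attraction weight times the radial factor \<open>1 - cos\<close>.\<close>
definition ring_coupling :: "nat \<Rightarrow> real \<Rightarrow> real \<Rightarrow> real" where
  "ring_coupling n m z = (\<Sum>k\<in>{1..n-1}.
     m / (1 - ((1 - z^2) * cos (2 * pi * real k / real n) + z^2)^2) powr (3/2)
       * (1 - cos (2 * pi * real k / real n)))"

text \<open>Every term is nonnegative and the nearest neighbour contributes a positive one, so a real
  angular velocity exists.\<close>
lemma ring_coupling_pos:
  assumes "n \<ge> 2" "m > 0" "z^2 < 1" "odd n \<or> z \<noteq> 0"
  shows "ring_coupling n m z > 0"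
  unfolding ring_coupling_def
proof (rule sum_pos2[where i = 1])
  let ?c = "cos (2 * pi * real (1::nat) / real n)"
  have "?c \<noteq> 1" and no_coll: "((1 - z^2) * ?c + z^2)^2 \<noteq> 1"
    using cos_polygon_ne_1[of 1 n] polygon_no_collision[of z 1 n] assms by auto
  then have chord: "1 - ?c > 0" using cos_le_one[of "2 * pi * real (1::nat) / real n"] by linarith
  have "m / (1 - ((1 - z^2) * ?c + z^2)^2) powr (3/2) > 0"
    using no_coll assms by simp
  then show "0 < m / (1 - ((1 - z^2) * ?c + z^2)^2) powr (3/2) * (1 - ?c)"
    using chord by (rule mult_pos_pos)
qed (use assms in auto)

text \<open>Algebraic core of the force balance on a circle: if the weights \<open>K\<close> of the bodies at
  angular offsets \<open>\<delta> j\<close> satisfy the radial condition \<open>S\<close> and the tangential condition \<open>T\<close>,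
  the total force on the body at angle \<open>\<theta>\<close> equals its acceleration under uniform rotation.\<close>
lemma circle_force_balance:
  fixes J :: "'i set" and \<delta> :: "'i \<Rightarrow> real" and K :: "real \<Rightarrow> real"
  assumes r2: "r^2 = 1 - z^2"
    and S: "(\<Sum>j\<in>J. K (cos (\<delta> j)) * (1 - cos (\<delta> j))) = w^2"
    and T: "(\<Sum>j\<in>J. K (cos (\<delta> j)) * sin (\<delta> j)) = 0"
  shows "vector [- r * w^2 * cos \<theta>, - r * w^2 * sin \<theta>, 0] =
    (\<Sum>j\<in>J. K (cos (\<delta> j)) *\<^sub>R (circle_point r z (\<theta> + \<delta> j)
        - (r^2 * cos (\<delta> j) + z^2) *\<^sub>R circle_point r z \<theta>))
    - (r^2 * w^2) *\<^sub>R circle_point r z \<theta>"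
proof -
  let ?S = "\<lambda>j. K (cos (\<delta> j)) * (1 - cos (\<delta> j))" and ?T = "\<lambda>j. K (cos (\<delta> j)) * sin (\<delta> j)"
  have zz: "z^2 = 1 - r^2" using r2 by simp
  have x: "(\<Sum>j\<in>J. K (cos (\<delta> j)) * (r * cos (\<theta> + \<delta> j) - (r^2 * cos (\<delta> j) + z^2) * (r * cos \<theta>)))
     = (\<Sum>j\<in>J. (- r * z^2 * cos \<theta>) * ?S j - (r * sin \<theta>) * ?T j)"
    by (rule sum.cong) (auto simp: cos_add r2 algebra_simps)
  have y: "(\<Sum>j\<in>J. K (cos (\<delta> j)) * (r * sin (\<theta> + \<delta> j) - (r^2 * cos (\<delta> j) + z^2) * (r * sin \<theta>)))
     = (\<Sum>j\<in>J. (- r * z^2 * sin \<theta>) * ?S j + (r * cos \<theta>) * ?T j)"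
    by (rule sum.cong) (auto simp: sin_add r2 algebra_simps)
  have z: "(\<Sum>j\<in>J. K (cos (\<delta> j)) * (z - (r^2 * cos (\<delta> j) + z^2) * z)) = (\<Sum>j\<in>J. (z * r^2) * ?S j)"
    by (rule sum.cong) (auto simp: r2 algebra_simps)
  have "(\<Sum>j\<in>J. K (cos (\<delta> j)) * (r * cos (\<theta> + \<delta> j) - (r^2 * cos (\<delta> j) + z^2) * (r * cos \<theta>)))
      - r^2 * w^2 * (r * cos \<theta>) = - r * w^2 * cos \<theta>"
    unfolding x sum_subtractf sum_distrib_left[symmetric] S T unfolding zz
    by (simp add: zz power2_eq_square algebra_simps)
  moreover have "(\<Sum>j\<in>J. K (cos (\<delta> j)) * (r * sin (\<theta> + \<delta> j) - (r^2 * cos (\<delta> j) + z^2) * (r * sin \<theta>)))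
      - r^2 * w^2 * (r * sin \<theta>) = - r * w^2 * sin \<theta>"
    unfolding y sum.distrib sum_distrib_left[symmetric] S T unfolding zz
    by (simp add: zz power2_eq_square algebra_simps)
  moreover have "(\<Sum>j\<in>J. K (cos (\<delta> j)) * (z - (r^2 * cos (\<delta> j) + z^2) * z)) - r^2 * w^2 * z = 0"
    unfolding z sum_distrib_left[symmetric] S by simp
  ultimately show ?thesis by (simp add: vec_eq_iff forall_3 circle_point_def)
qed

lemma rotating_ngon_circle_point:
  "rotating_ngon n z w i = (\<lambda>t. circle_point (sqrt (1 - z^2)) z (w * t + 2 * pi * real i / real n))"
  by (rule ext) (simp add: rotating_ngon_def circle_point_def Let_def)

lemma polygon_force_balance:
  assumes r2: "r^2 = 1 - z^2" and i: "i \<in> {1..n}" and w: "w^2 = ring_coupling n m z"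
  shows "nbody_accel n (\<lambda>_. m) (\<lambda>j. circle_point r z (\<phi> + 2 * pi * real j / real n))
      (\<lambda>j. vector [- r * w * sin (\<phi> + 2 * pi * real j / real n), r * w * cos (\<phi> + 2 * pi * real j / real n), 0]) i
    = vector [- r * w^2 * cos (\<phi> + 2 * pi * real i / real n), - r * w^2 * sin (\<phi> + 2 * pi * real i / real n), 0]"
proof -
  define \<theta> where "\<theta> = \<phi> + 2 * pi * real i / real n"
  define \<delta> where "\<delta> j = 2 * pi * (real j - real i) / real n" for j
  define K where "K c = m / (1 - (r^2 * c + z^2)^2) powr (3/2)" for c
  have position: "\<phi> + 2 * pi * real j / real n = \<theta> + \<delta> j" for j
    using i by (simp add: \<theta>_def \<delta>_def field_simps)
  have S: "(\<Sum>j\<in>{1..n} - {i}. K (cos (\<delta> j)) * (1 - cos (\<delta> j))) = w^2"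
    using sum_polygon_shift[OF _ i, of "\<lambda>x. K (cos x) * (1 - cos x)"] w r2
    by (simp add: ring_coupling_def K_def \<delta>_def)
  have T: "(\<Sum>j\<in>{1..n} - {i}. K (cos (\<delta> j)) * sin (\<delta> j)) = 0"
    using sum_polygon_shift[OF _ i, of "\<lambda>x. K (cos x) * sin x"]
      sum_polygon_odd[of "\<lambda>x. K (cos x) * sin x" n]
    by (simp add: \<delta>_def)
  have "nbody_accel n (\<lambda>_. m) (\<lambda>j. circle_point r z (\<phi> + 2 * pi * real j / real n))
      (\<lambda>j. vector [- r * w * sin (\<phi> + 2 * pi * real j / real n), r * w * cos (\<phi> + 2 * pi * real j / real n), 0]) i
    = (\<Sum>j\<in>{1..n} - {i}. K (cos (\<delta> j)) *\<^sub>R (circle_point r z (\<theta> + \<delta> j)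
        - (r^2 * cos (\<delta> j) + z^2) *\<^sub>R circle_point r z \<theta>))
      - (r^2 * w^2) *\<^sub>R circle_point r z \<theta>"
    unfolding nbody_accel_def position using circle_velocity_sq[of r w \<theta>]
    by (simp add: \<delta>_def circle_point_inner K_def del: vector_3)
  also have "\<dots> = vector [- r * w^2 * cos \<theta>, - r * w^2 * sin \<theta>, 0]"
    by (rule circle_force_balance[OF r2 S T, symmetric])
  finally show ?thesis by (simp add: \<theta>_def)
qed

lemma rotating_ngon_solution:
  assumes z: "z^2 < 1" and odd: "odd n \<or> z \<noteq> 0" and w: "w^2 = ring_coupling n m z"
  shows "nbody_S2_solution n (\<lambda>_. m) (rotating_ngon n z w)"
proof -
  define r where "r = sqrt (1 - z^2)"
  define \<alpha> where "\<alpha> j = 2 * pi * real j / real n" for j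
  have r2: "r^2 = 1 - z^2" using z by (simp add: r_def)
  have q: "rotating_ngon n z w = (\<lambda>j t. circle_point r z (w * t + \<alpha> j))"
    by (simp add: fun_eq_iff rotating_ngon_circle_point r_def \<alpha>_def)
  have no_collision: "(circle_point r z (w * t + \<alpha> i) \<bullet> circle_point r z (w * t + \<alpha> j))^2 \<noteq> 1"
    if "i \<in> {1..n}" "j \<in> {1..n}" "j \<noteq> i" for i j t
  proof -
    have angle: "(w * t + \<alpha> j) - (w * t + \<alpha> i) = 2 * pi * of_int (int j - int i) / real n"
      by (simp add: \<alpha>_def diff_divide_distrib algebra_simps)
    have "int j - int i \<noteq> 0" "\<bar>int j - int i\<bar> < int n" using that by auto
    from polygon_no_collision[OF z this odd] show ?thesis
      unfolding circle_point_inner r2 angle .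
  qed
  show ?thesis
    unfolding nbody_S2_solution_def q
  proof (rule exI[of _ "\<lambda>j t. vector [- r * w * sin (w * t + \<alpha> j), r * w * cos (w * t + \<alpha> j), 0]"],
      rule exI[of _ "\<lambda>j t. vector [- r * w^2 * cos (w * t + \<alpha> j), - r * w^2 * sin (w * t + \<alpha> j), 0]"],
      intro allI ballI conjI impI)
    fix t i assume i: "i \<in> {1..n}"
    show "vector [- r * w^2 * cos (w * t + \<alpha> i), - r * w^2 * sin (w * t + \<alpha> i), 0]
      = nbody_accel n (\<lambda>_. m) (\<lambda>j. circle_point r z (w * t + \<alpha> j))
          (\<lambda>j. vector [- r * w * sin (w * t + \<alpha> j), r * w * cos (w * t + \<alpha> j), 0]) i"
      unfolding \<alpha>_def by (rule polygon_force_balance[OF r2 i w, symmetric])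
  qed (rule circle_motion_velocity circle_motion_acceleration circle_point_on_sphere[OF r2]
        circle_velocity_orthogonal no_collision | assumption)+
qed

theorem mainTheorem7:
  fixes n :: nat and m z :: real
  assumes "n \<ge> 2" and "m > 0" and "-1 < z" and "z < 1"
    and "odd n \<or> z \<noteq> 0"
  shows "(\<exists>w>0. nbody_S2_solution n (\<lambda>_. m) (rotating_ngon n z w)) \<and>
         (\<exists>w<0. nbody_S2_solution n (\<lambda>_. m) (rotating_ngon n z w))"
proof -
  let ?w = "sqrt (ring_coupling n m z)"
  have z: "z^2 < 1" using assms by (simp add: abs_square_less_1)
  have "ring_coupling n m z > 0" using ring_coupling_pos[OF _ _ z] assms by simp
  then have "?w > 0" and "- ?w < 0" and "?w^2 = ring_coupling n m z" and "(- ?w)^2 = ring_coupling n m z"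
    by simp_all
  with rotating_ngon_solution[OF z] assms show ?thesis by blast
qed

end
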